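(* Let $1\le d\le n$ be integers with $\gcd(n,d)=1$ and $d^2\equiv 1\pmod n$. Let $n=n'm$ with $n',m$ positive integers and $m$ odd, and let $1\le d'\le n'$ with $d'\equiv d\pmod{n'}$. Then $(n,d)$ is a critical pair if and only if $(n',d')$ is a critical pair.
   Context: A pair of positive integers $(n,d)$ with $d<n$ and $\gcd(n,d)=1$ is a critical pair if the Hirzebruch–Jung expansion $(a_0,\dots,a_r)$ of $n/d$ (defined by $\frac nd=a_0-1/(a_1-1/(\cdots-1/a_r))$, $a_i\ge2$) is symmetric ($a_i=a_{r-i}$ for all $i$), of odd length ($r$ even), and has even central term $a_{r/2}$. A pair $(n,d)$ with $d=n$ (i.e. $(1,1)$) is not critical. *)

theory Defs
  imports "HOL-Number_Theory.Number_Theory"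
begin

text \<open>Hirzebruch-Jung (negative) continued fraction expansion of n/d:
  n/d = a0 - 1/(a1 - 1/( ... - 1/ar)).  At each step a = ceiling(n/d) and the
  remainder a/1 - n/d = r/d with r = a*d - n, so we continue with d/r.\<close>

function hj :: "nat \<Rightarrow> nat \<Rightarrow> nat list" where
  "hj n d = (if d = 0 then []
             else if d dvd n then [n div d]
             else (n div d + 1) # hj d ((n div d + 1) * d - n))"
  by pat_completeness auto
termination
proof (relation "measure snd")
  fix n d :: nat
  assume d: "d \<noteq> 0" and nd: "\<not> d dvd n"
  have s: "n mod d > 0" using nd by (simp add: dvd_eq_mod_eq_0)
  have e: "n div d * d + n mod d = n" by simp
  have "(n div d + 1) * d - n = d - n mod d"
  proof -
    have "(n div d + 1) * d = n div d * d + d" by simp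
    thus ?thesis using e by linarith
  qed
  thus "((d, (n div d + 1) * d - n), (n, d)) \<in> measure snd" using s d by simp
qed auto

definition critical_pair :: "nat \<Rightarrow> nat \<Rightarrow> bool" where
  "critical_pair n d \<longleftrightarrow>
     0 < d \<and> d < n \<and> coprime n d \<and>
     (let as = hj n d in
        rev as = as \<and> odd (length as) \<and> even (as ! (length as div 2)))"

end

theory Submission
  imports Defs
begin

text \<open>The expansion (a_0, ..., a_r) of n/d is encoded by the product M of the matrices
  [[a_i, -1], [1, 0]]: M has determinant 1 and first column (n, d), and reversing the
  expansion transposes M up to signs.  Hence the reversed expansion is that of n/e with
  e d \<equiv> 1 (mod n), so d^2 \<equiv> 1 makes the expansion a palindrome w @ [c] @ rev w or w @ rev w.
  If w has matrix [[p, t], [r, u]], then n = p (p c + 2 t), d - 1 = r (p c + 2 t),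
  d + 1 = p (r c + 2 u) in the odd case, and n = (p - t)(p + t), d - 1 = (p + t)(r - u),
  d + 1 = (p - t)(r + u) in the even case.  A parity analysis of these factorisations shows
  that (n, d) is critical iff n is even and d \<equiv> \<plusminus>1 modulo the largest power of 2 dividing n.
  This condition only sees the 2-part of n and d modulo it, which (n', d') shares with (n, d).\<close>

declare hj.simps [simp del]

text \<open>(a, b, c, e) stands for the matrix [[a, b], [c, e]].\<close>
type_synonym mat2 = "int \<times> int \<times> int \<times> int"

definition mat2_mult :: "mat2 \<Rightarrow> mat2 \<Rightarrow> mat2" where
  "mat2_mult X Y = (case X of (a, b, c, d) \<Rightarrow> case Y of (e, f, g, h) \<Rightarrow>
     (a * e + b * g, a * f + b * h, c * e + d * g, c * f + d * h))"

lemma mat2_mult_assoc: "mat2_mult (mat2_mult X Y) Z = mat2_mult X (mat2_mult Y Z)"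
  by (cases X; cases Y; cases Z) (simp add: mat2_mult_def algebra_simps)

lemma mat2_mult_one [simp]: "mat2_mult (1, 0, 0, 1) X = X" "mat2_mult X (1, 0, 0, 1) = X"
  by (cases X; simp add: mat2_mult_def)+

fun hj_matrix :: "nat list \<Rightarrow> mat2" where
  "hj_matrix [] = (1, 0, 0, 1)"
| "hj_matrix (a # as) = mat2_mult (int a, -1, 1, 0) (hj_matrix as)"

lemma hj_matrix_append: "hj_matrix (xs @ ys) = mat2_mult (hj_matrix xs) (hj_matrix ys)"
  by (induction xs) (simp_all add: mat2_mult_assoc)

text \<open>Each factor A = [[a, -1], [1, 0]] satisfies transpose A = J A J with J = diag(1, -1).\<close>
lemma hj_matrix_rev:
  "hj_matrix xs = (p, q, r, s) \<Longrightarrow> hj_matrix (rev xs) = (p, -r, -q, s)"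
proof (induction xs arbitrary: p q r s)
  case (Cons a xs)
  then show ?case
    by (cases "hj_matrix xs") (auto simp: hj_matrix_append mat2_mult_def algebra_simps)
qed simp

lemma hj_matrix_det: "hj_matrix xs = (p, q, r, s) \<Longrightarrow> p * s - q * r = 1"
proof (induction xs arbitrary: p q r s)
  case (Cons a xs)
  obtain p' q' r' s' where M: "hj_matrix xs = (p', q', r', s')"
    by (cases "hj_matrix xs") auto
  with Cons.prems have entries: "p = int a * p' - r'" "q = int a * q' - s'" "r = p'" "s = q'"
    by (auto simp: mat2_mult_def)
  show ?case unfolding entries using Cons.IH[OF M] by (simp add: algebra_simps)
qed simp

lemma hj_matrix_first_column_bounds:
  assumes "xs \<noteq> []" "\<forall>a\<in>set xs. 2 \<le> a" "hj_matrix xs = (p, q, r, s)"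
  shows "0 < r \<and> r < p"
  using assms
proof (induction xs arbitrary: p q r s)
  case (Cons a xs)
  show ?case
  proof (cases "xs = []")
    case True
    then show ?thesis using Cons.prems by (auto simp: mat2_mult_def)
  next
    case False
    obtain p' q' r' s' where M: "hj_matrix xs = (p', q', r', s')"
      by (cases "hj_matrix xs") auto
    with Cons False have "0 < r'" "r' < p'" by auto
    moreover have "2 * p' \<le> int a * p'"
      using Cons.prems \<open>r' < p'\<close> \<open>0 < r'\<close> by (intro mult_right_mono) auto
    moreover have "p = int a * p' - r'" "r = p'"
      using Cons.prems M by (auto simp: mat2_mult_def)
    ultimately show ?thesis by linarith
  qed
qed simp

lemma hj_Cons:
  "0 < d \<Longrightarrow> \<not> d dvd n \<Longrightarrow> hj n d = (n div d + 1) # hj d ((n div d + 1) * d - n)"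
  by (simp add: hj.simps)

lemma hj_remainder_bounds:
  fixes n d :: nat
  assumes "0 < d" "\<not> d dvd n"
  shows "0 < (n div d + 1) * d - n" "(n div d + 1) * d - n < d"
proof -
  have "(n div d + 1) * d = d * (n div d) + d" by simp
  then have "(n div d + 1) * d - n = d - n mod d"
    using mult_div_mod_eq[of d n] by linarith
  moreover have "0 < n mod d" "n mod d < d"
    using assms by (simp_all add: dvd_eq_mod_eq_0)
  ultimately show "0 < (n div d + 1) * d - n" "(n div d + 1) * d - n < d" by simp_all
qed

lemma hj_ge_two: "0 < d \<Longrightarrow> d < n \<Longrightarrow> a \<in> set (hj n d) \<Longrightarrow> 2 \<le> a"
proof (induction n d rule: hj.induct)
  case (1 n d)
  show ?case
  proof (cases "d dvd n")
    case True
    then obtain k where "n = d * k" by blast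
    with 1 True show ?thesis by (auto simp: hj.simps)
  next
    case False
    have "0 < n div d" using "1.prems" by (simp add: div_greater_zero_iff)
    with 1 False hj_remainder_bounds[of d n] show ?thesis by (auto simp: hj_Cons)
  qed
qed

lemma hj_matrix_hj:
  "0 < d \<Longrightarrow> coprime n d \<Longrightarrow> \<exists>q s. hj_matrix (hj n d) = (int n, q, int d, s)"
proof (induction n d rule: hj.induct)
  case (1 n d)
  show ?case
  proof (cases "d dvd n")
    case True
    with "1.prems" have "d = 1" by auto
    then show ?thesis by (simp add: hj.simps mat2_mult_def)
  next
    case False
    define a where "a = n div d + 1"
    define d' where "d' = a * d - n"
    have "a * d = d * (n div d) + d" by (simp add: a_def)
    then have "n \<le> a * d"
      using mult_div_mod_eq[of d n] mod_less_divisor[OF "1.prems"(1), of n] by linarith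
    then have d'_int: "int d' = int a * int d - int n" by (simp add: d'_def of_nat_diff)
    have "coprime (int d) (int a * int d - int n)"
      using "1.prems"(2) by (metis coprime_commute coprime_minus_right_iff coprime_iff_gcd_eq_1
          diff_conv_add_uminus gcd_add_mult coprime_int_iff)
    then have "coprime d d'" by (simp flip: d'_int)
    moreover have "0 < d'" using hj_remainder_bounds[of d n] "1.prems" False
      unfolding d'_def a_def by simp
    ultimately obtain q s where "hj_matrix (hj d d') = (int d, q, int d', s)"
      using "1.IH" "1.prems" False unfolding a_def d'_def by blast
    then show ?thesis
      using False "1.prems" d'_int unfolding a_def d'_def by (auto simp: hj_Cons mat2_mult_def)
  qed
qed

lemma hj_eqI:
  assumes "xs \<noteq> []" "\<forall>a\<in>set xs. 2 \<le> a" "hj_matrix xs = (int n, q, int d, s)"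
  shows "hj n d = xs"
  using assms
proof (induction xs arbitrary: n d q s)
  case (Cons a ys)
  show ?case
  proof (cases "ys = []")
    case True
    then have "n = a" "d = 1" using Cons.prems by (auto simp: mat2_mult_def)
    then show ?thesis using True by (simp add: hj.simps)
  next
    case False
    obtain p q' r s' where M: "hj_matrix ys = (p, q', r, s')"
      by (cases "hj_matrix ys") auto
    have "0 < r" "r < p"
      using hj_matrix_first_column_bounds[OF False _ M] Cons.prems by auto
    define P R where "P = nat p" and "R = nat r"
    have PR: "p = int P" "r = int R" "0 < R" "R < P"
      using \<open>0 < r\<close> \<open>r < p\<close> unfolding P_def R_def by auto
    have "hj P R = ys" using Cons.IH[OF False] Cons.prems M PR by auto
    have "int n = int a * p - r" "d = P" using Cons.prems M PR by (auto simp: mat2_mult_def)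
    then have n_eq: "n + R = a * P" using PR by (simp flip: of_nat_mult of_nat_add)
    have "2 \<le> a" using Cons.prems by simp
    then have "P * (a - 1) \<le> n" "n < P * Suc (a - 1)"
      using n_eq PR by (simp_all add: algebra_simps)
    then have "n div P = a - 1" by (rule div_nat_eqI)
    moreover have "\<not> P dvd n"
    proof
      assume "P dvd n"
      then have "P dvd R" using n_eq by (metis dvd_add_right_iff dvd_triv_right)
      then show False using PR by (simp add: nat_dvd_not_less)
    qed
    moreover have "a * P - n = R" using n_eq by simp
    ultimately show ?thesis
      using \<open>d = P\<close> \<open>2 \<le> a\<close> PR \<open>hj P R = ys\<close> by (simp add: hj_Cons)
  qed
qed simp

lemma hj_palindrome:
  assumes "0 < d" "d < n" "coprime n d" "[d^2 = 1] (mod n)"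
  shows "rev (hj n d) = hj n d"
proof -
  obtain q s where M: "hj_matrix (hj n d) = (int n, q, int d, s)"
    using hj_matrix_hj assms by blast
  have "hj n d \<noteq> []" using assms by (cases "d dvd n") (simp_all add: hj.simps)
  moreover have "\<forall>a\<in>set (hj n d). 2 \<le> a" using hj_ge_two assms by blast
  moreover have M_rev: "hj_matrix (rev (hj n d)) = (int n, - int d, - q, s)"
    using hj_matrix_rev[OF M] by simp
  ultimately have "0 < - q" "- q < int n"
    using hj_matrix_first_column_bounds[OF _ _ M_rev] by auto
  define e where "e = nat (- q)"
  have e_int: "int e = - q" "e < n" using \<open>0 < - q\<close> \<open>- q < int n\<close> by (auto simp: e_def)
  have "hj n e = rev (hj n d)"
    using hj_eqI[of "rev (hj n d)" n] M_rev e_int \<open>hj n d \<noteq> []\<close>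
      \<open>\<forall>a\<in>set (hj n d). 2 \<le> a\<close> by simp
  have "int n * s - q * int d = 1" using hj_matrix_det[OF M] .
  then have "int e * int d - 1 = int n * (- s)" by (simp add: e_int algebra_simps)
  then have "[int e * int d = 1] (mod int n)" by (simp add: cong_iff_dvd_diff)
  then have ed: "[e * d = 1] (mod n)" by (simp flip: cong_int_iff)
  have "[e = e * d^2] (mod n)" using cong_scalar_left[OF cong_sym[OF assms(4)], of e] by simp
  also have "e * d^2 = (e * d) * d" by (simp add: power2_eq_square)
  also have "[(e * d) * d = 1 * d] (mod n)" using cong_scalar_right[OF ed] .
  finally have "e = d" using cong_less_imp_eq_nat e_int assms(2) by simp
  with \<open>hj n e = rev (hj n d)\<close> show ?thesis by simp
qed

lemma palindrome_odd_decomp: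
  assumes "rev xs = xs" "odd (length xs)"
  shows "xs = take (length xs div 2) xs @ [xs ! (length xs div 2)] @ rev (take (length xs div 2) xs)"
proof -
  let ?h = "length xs div 2"
  have "rev (take ?h xs) = drop (length xs - ?h) (rev xs)" by (simp add: rev_take)
  also have "length xs - ?h = Suc ?h" using assms(2) by presburger
  finally have "rev (take ?h xs) = drop (Suc ?h) xs" using assms(1) by simp
  moreover have "?h < length xs" using assms(2) by (cases "length xs") auto
  then have "drop ?h xs = xs ! ?h # drop (Suc ?h) xs" by (rule Cons_nth_drop_Suc[symmetric])
  ultimately show ?thesis by (metis append_Cons append_Nil append_take_drop_id)
qed

lemma palindrome_even_decomp:
  assumes "rev xs = xs" "even (length xs)"
  shows "xs = take (length xs div 2) xs @ rev (take (length xs div 2) xs)"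
proof -
  let ?h = "length xs div 2"
  have "rev (take ?h xs) = drop (length xs - ?h) (rev xs)" by (simp add: rev_take)
  also have "length xs - ?h = ?h" using assms(2) by presburger
  finally have "rev (take ?h xs) = drop ?h xs" using assms(1) by simp
  then show ?thesis by simp
qed

definition pm_one_mod_two_part :: "int \<Rightarrow> int \<Rightarrow> bool" where
  "pm_one_mod_two_part n d \<longleftrightarrow> even n \<and>
     (\<exists>j. 2 ^ j dvd n \<and> \<not> 2 ^ Suc j dvd n \<and> (2 ^ j dvd d - 1 \<or> 2 ^ j dvd d + 1))"

lemma two_power_dvd_odd_mult_iff: "odd z \<Longrightarrow> (2::int) ^ j dvd z * w \<longleftrightarrow> 2 ^ j dvd w"
  by (simp add: coprime_dvd_mult_right_iff)

lemma pm_one_mod_two_partI: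
  fixes n d X Y :: int
  assumes "n \<noteq> 0" "even n" "n = X * Y" "odd Y" "X dvd d - 1 \<or> X dvd d + 1"
  shows "pm_one_mod_two_part n d"
proof -
  define j where "j = multiplicity 2 n"
  have j: "2 ^ j dvd n" "\<not> 2 ^ Suc j dvd n"
    using multiplicity_dvd power_dvd_iff_le_multiplicity[of n 2 "Suc j"] assms(1)
    by (simp_all add: j_def)
  then have "2 ^ j dvd X" using assms(3,4) two_power_dvd_odd_mult_iff[of Y j X]
    by (simp add: mult.commute)
  then have "2 ^ j dvd d - 1 \<or> 2 ^ j dvd d + 1" using assms(5) dvd_trans by blast
  then show ?thesis unfolding pm_one_mod_two_part_def using assms(2) j by blast
qed

lemma not_pm_one_mod_two_partI:
  fixes n d X Y U V :: int
  assumes "n = X * Y" "even X" "even Y" "d - 1 = Y * U" "d + 1 = X * V" "odd U" "odd V"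
  shows "\<not> pm_one_mod_two_part n d"
proof
  assume "pm_one_mod_two_part n d"
  then obtain j where j: "\<not> 2 ^ Suc j dvd n" and jd: "2 ^ j dvd d - 1 \<or> 2 ^ j dvd d + 1"
    unfolding pm_one_mod_two_part_def by blast
  from jd show False
  proof
    assume "2 ^ j dvd d - 1"
    then have "2 ^ j dvd Y" using assms(4,6) two_power_dvd_odd_mult_iff[of U j Y]
      by (simp add: mult.commute)
    then have "2 * 2 ^ j dvd X * Y" using assms(2) by (simp add: mult_dvd_mono)
    then show False using j assms(1) by simp
  next
    assume "2 ^ j dvd d + 1"
    then have "2 ^ j dvd X" using assms(5,7) two_power_dvd_odd_mult_iff[of V j X]
      by (simp add: mult.commute)
    then have "2 ^ j * 2 dvd X * Y" using assms(3) by (simp add: mult_dvd_mono)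
    then show False using j assms(1) by (simp add: mult.commute)
  qed
qed

lemma pm_one_mod_two_part_imp_even: "pm_one_mod_two_part n d \<Longrightarrow> even n"
  by (simp add: pm_one_mod_two_part_def)

lemma pm_one_mod_two_part_odd_palindrome_iff:
  fixes p t r u c n d :: int
  assumes det: "p * u - t * r = 1" and n: "n = p * (p * c + 2 * t)"
    and d: "d = r * c * p + u * p + r * t" and "n \<noteq> 0"
  shows "pm_one_mod_two_part n d \<longleftrightarrow> even c"
proof -
  have d_minus: "d - 1 = (p * c + 2 * t) * r" and d_plus: "d + 1 = p * (r * c + 2 * u)"
    using det by (simp_all add: d algebra_simps)
  have t_r_odd: "odd t" "odd r" if "even p"
    using det that by (metis dvd_diff even_mult_iff odd_one)+
  show ?thesis
  proof (cases "even c")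
    case True
    then obtain c' where c': "c = 2 * c'" by blast
    have "pm_one_mod_two_part n d"
    proof (cases "even p")
      case True
      have "n = (2 * p) * (p * c' + t)" "d + 1 = (2 * p) * (r * c' + u)"
        using n d_plus c' by (simp_all add: algebra_simps)
      moreover have "odd (p * c' + t)" using True t_r_odd by simp
      ultimately show ?thesis using \<open>n \<noteq> 0\<close> by (intro pm_one_mod_two_partI) auto
    next
      case False
      have "n = (p * c + 2 * t) * p" using n by simp
      moreover have "even n" using n c' by simp
      ultimately show ?thesis using \<open>n \<noteq> 0\<close> False d_minus
        by (intro pm_one_mod_two_partI) auto
    qed
    with True show ?thesis by simp
  next
    case False
    have "\<not> pm_one_mod_two_part n d"
    proof (cases "even p")
      case True
      with False t_r_odd show ?thesis
        by (intro not_pm_one_mod_two_partI[OF n _ _ d_minus d_plus]) auto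
    next
      case False
      then have "odd n" using n \<open>odd c\<close> by simp
      then show ?thesis using pm_one_mod_two_part_imp_even by blast
    qed
    with False show ?thesis by simp
  qed
qed

lemma not_pm_one_mod_two_part_even_palindrome:
  fixes p t r u n d :: int
  assumes det: "p * u - t * r = 1" and n: "n = p * p - t * t" and d: "d = r * p - u * t"
  shows "\<not> pm_one_mod_two_part n d"
proof (cases "even n")
  case True
  have n': "n = (p - t) * (p + t)" and d_minus: "d - 1 = (p + t) * (r - u)"
    and d_plus: "d + 1 = (p - t) * (r + u)"
    using det by (simp_all add: n d algebra_simps)
  have "even (p - t)" "even (p + t)" using True n' by auto
  moreover have "(p - t) * r - p * (r - u) = 1" using det by (simp add: algebra_simps)
  then have "odd (r - u)" using \<open>even (p - t)\<close> by (metis dvd_diff dvd_mult dvd_mult2 odd_one)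
  ultimately show ?thesis by (intro not_pm_one_mod_two_partI[OF n' _ _ d_minus d_plus]) auto
next
  case False
  then show ?thesis using pm_one_mod_two_part_imp_even by blast
qed

lemma critical_pair_iff_pm_one_mod_two_part:
  assumes "0 < d" "d \<le> n" "coprime n d" "[d^2 = 1] (mod n)"
  shows "critical_pair n d \<longleftrightarrow> pm_one_mod_two_part (int n) (int d)"
proof (cases "d = n")
  case True
  then have "n = 1" using assms(3) by simp
  then show ?thesis using True by (simp add: critical_pair_def pm_one_mod_two_part_def)
next
  case False
  then have "d < n" using assms(2) by simp
  define xs where "xs = hj n d"
  define h where "h = length xs div 2"
  have pal: "rev xs = xs" using hj_palindrome assms \<open>d < n\<close> unfolding xs_def by blast
  have crit: "critical_pair n d \<longleftrightarrow> odd (length xs) \<and> even (xs ! h)"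
    using pal assms \<open>d < n\<close> unfolding critical_pair_def xs_def h_def Let_def by simp
  obtain q s where M: "hj_matrix xs = (int n, q, int d, s)"
    using hj_matrix_hj assms unfolding xs_def by blast
  obtain p t r u where W: "hj_matrix (take h xs) = (p, t, r, u)"
    by (cases "hj_matrix (take h xs)") auto
  have det: "p * u - t * r = 1" using hj_matrix_det[OF W] .
  have W_rev: "hj_matrix (rev (take h xs)) = (p, - r, - t, u)" using hj_matrix_rev[OF W] .
  have "int n \<noteq> 0" using \<open>d < n\<close> by simp
  show ?thesis
  proof (cases "odd (length xs)")
    case True
    have "xs = take h xs @ [xs ! h] @ rev (take h xs)"
      using palindrome_odd_decomp[OF pal True] unfolding h_def .
    then have "hj_matrix xs = hj_matrix (take h xs @ [xs ! h] @ rev (take h xs))"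
      by (rule arg_cong)
    also have "\<dots> = mat2_mult (p, t, r, u) (mat2_mult (int (xs ! h), -1, 1, 0) (p, - r, - t, u))"
      using W W_rev by (simp add: hj_matrix_append)
    finally have "int n = p * (p * int (xs ! h) + 2 * t)"
      "int d = r * int (xs ! h) * p + u * p + r * t"
      using M by (auto simp: mat2_mult_def algebra_simps)
    then have "pm_one_mod_two_part (int n) (int d) \<longleftrightarrow> even (int (xs ! h))"
      using pm_one_mod_two_part_odd_palindrome_iff[OF det] \<open>int n \<noteq> 0\<close> by blast
    with crit True show ?thesis by simp
  next
    case False
    have "xs = take h xs @ rev (take h xs)"
      using palindrome_even_decomp[OF pal] False unfolding h_def by simp
    then have "hj_matrix xs = hj_matrix (take h xs @ rev (take h xs))"
      by (rule arg_cong)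
    also have "\<dots> = mat2_mult (p, t, r, u) (p, - r, - t, u)"
      using W W_rev by (simp add: hj_matrix_append)
    finally have "int n = p * p - t * t" "int d = r * p - u * t"
      using M by (auto simp: mat2_mult_def algebra_simps)
    then have "\<not> pm_one_mod_two_part (int n) (int d)"
      by (rule not_pm_one_mod_two_part_even_palindrome[OF det])
    with crit False show ?thesis by simp
  qed
qed

lemma pm_one_mod_two_part_odd_cofactor:
  fixes n n' m d d' :: int
  assumes "n = n' * m" "odd m" "n' dvd d' - d"
  shows "pm_one_mod_two_part n d \<longleftrightarrow> pm_one_mod_two_part n' d'"
proof -
  have pow: "2 ^ j dvd n \<longleftrightarrow> 2 ^ j dvd n'" for j
    using assms(1,2) two_power_dvd_odd_mult_iff[of m j n'] by (simp add: mult.commute)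
  have "(2 ^ j dvd d - 1 \<longleftrightarrow> 2 ^ j dvd d' - 1) \<and> (2 ^ j dvd d + 1 \<longleftrightarrow> 2 ^ j dvd d' + 1)"
    if "2 ^ j dvd n'" for j
  proof -
    have "2 ^ j dvd d' - d" using that assms(3) by (rule dvd_trans)
    from dvd_add_right_iff[OF this, of "d - 1"] dvd_add_right_iff[OF this, of "d + 1"]
    show ?thesis by simp
  qed
  moreover have "even n \<longleftrightarrow> even n'" using pow[of 1] by simp
  ultimately show ?thesis unfolding pm_one_mod_two_part_def using pow by metis
qed

theorem corollary1p7:
  fixes n d n' m d' :: nat
  assumes "1 \<le> d" and "d \<le> n" and "coprime n d"
    and "[d ^ 2 = 1] (mod n)"
    and "n = n' * m" and "0 < n'" and "0 < m" and "odd m"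
    and "1 \<le> d'" and "d' \<le> n'" and "[d' = d] (mod n')"
  shows "critical_pair n d \<longleftrightarrow> critical_pair n' d'"
proof -
  have "coprime n' d" using assms(3,5) by simp
  then have coprime': "coprime n' d'"
    using cong_gcd_eq[OF assms(11)] by (metis coprime_iff_gcd_eq_1 gcd.commute)
  have "[d' ^ 2 = d ^ 2] (mod n')" by (rule cong_pow[OF assms(11)])
  moreover have "[d ^ 2 = 1] (mod n')" using assms(4,5) cong_dvd_modulus_nat by auto
  ultimately have square': "[d' ^ 2 = 1] (mod n')" by (rule cong_trans)
  have "int n' dvd int d' - int d"
    using assms(11) by (simp add: cong_iff_dvd_diff flip: cong_int_iff)
  then have "pm_one_mod_two_part (int n) (int d) \<longleftrightarrow> pm_one_mod_two_part (int n') (int d')"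
    using assms(5,8) by (intro pm_one_mod_two_part_odd_cofactor) auto
  then show ?thesis
    using critical_pair_iff_pm_one_mod_two_part[of d n] assms(1-4)
      critical_pair_iff_pm_one_mod_two_part[of d' n'] assms(9,10) coprime' square'
    by simp
qed

end
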